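(* In the non-stationary non-deterministic bandit described in the context, satisfying the stated assumption with constants $\theta>1$, $\xi>1$, $1/2\le\eta<1$, where $\xi$ is large enough that $\alpha>2$ satisfies $\xi\eta(1-\eta)\le\alpha<\xi(1-\eta)$, run the UCB algorithm of the context and let $$\hat\rho^{\mathrm{stream}}_n=\frac1\beta\ln\Big(\frac1n\sum_{i=1}^K\sum_{s'\in\mathcal{S}}\sum_{t=1}^{T^{s'}_i(T_i(n))}\exp\big(\beta(c_i+\gamma x^{s'}_{i,t})\big)\Big).$$ Then 1. there exist constants $\theta''>1$, $\xi''>1$, $1/2\le\eta''<1$ such that for every $n\in\mathbb{N}$ and $z\ge1$, $$\mathbb{P}[n\hat\rho^{\mathrm{stream}}_n-n\mu^*\ge n^{\eta''}z]\le\frac{\theta''}{z^{\xi''}},\qquad \mathbb{P}[n\hat\rho^{\mathrm{stream}}_n-n\mu^*\le -n^{\eta''}z]\le\frac{\theta''}{z^{\xi''}},$$ where $\eta''=\frac{\alpha}{\xi(1-\eta)}$, $\xi''=\alpha-1$, and $\theta''$ depends on $R,K,\Delta_{\min},\beta,\theta,\xi,\alpha,\eta$ (and on $\theta^L$); 2. $|\mu^*-\mathbb{E}[\hat\rho^{\mathrm{stream}}_n]|=O\big(\theta''n^{\frac{\alpha}{\xi(1-\eta)}-1}\big)$, in particular $\lim_{n\to\infty}\mathbb{E}[\hat\rho^{\mathrm{stream}}_n]=\mu^*$.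
   Context: Non-deterministic bandit with $K$ arms and finite state set $\mathcal{S}$, $\beta>0$, $\gamma\in(0,1]$. Selecting arm $i$ yields a deterministic cost $c_i\in[-R_c,R_c]$ and a next state $s'$ drawn independently each time from a distribution $P^i$ on $\mathcal{S}$; for each $i,s'$ there is a sequence of (possibly non-stationary) random costs $(x^{s'}_{i,t})_{t\ge1}$ in $[-R_x,R_x]$, the $t$-th cost obtained after state $s'$ follows arm $i$. $R=R_c+R_x$. Let $\hat\rho^{s'}_{i,n}=\frac1{\beta\gamma}\ln(\frac1n\sum_{t=1}^n e^{\beta\gamma x^{s'}_{i,t}})$, $\mu^{s'}_{i,n}=\mathbb{E}[\hat\rho^{s'}_{i,n}]$. Assumption: $\lim_n\mu^{s'}_{i,n}=\mu^{s'}_i$ exists and $\mathbb{P}[n\hat\rho^{s'}_{i,n}-n\mu^{s'}_i\ge n^\eta z]\le\theta/z^\xi$, $\mathbb{P}[n\hat\rho^{s'}_{i,n}-n\mu^{s'}_i\le -n^\eta z]\le\theta/z^\xi$ for all $i,s'$, $z\ge1$, $n\in\mathbb{N}$. With $T^{s'}_i(n)$ the number of times $s'$ was sampled in the first $n$ selections of arm $i$, $\hat\rho_{i,n}=\frac1\beta\ln\big(\frac1n\sum_{s'}\sum_{t=1}^{T^{s'}_i(n)}\exp(\beta(c_i+\gamma x^{s'}_{i,t}))\big)$, and $\mu_i=\frac1\beta\ln\mathbb{E}_{s'\sim P^i}[\exp(\beta(c_i+\gamma\mu^{s'}_i))]$. Let $\theta^L>1$ be a constant such that $\mathbb{P}[n\hat\rho_{i,n}-n\mu_i\ge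 n^\eta z]\le\theta^L/z^\xi$ and $\mathbb{P}[n\hat\rho_{i,n}-n\mu_i\le -n^\eta z]\le\theta^L/z^\xi$ for all $i$, $z\ge1$, $n$ (such a constant exists). There is a unique arm $i^*$ attaining $\mu^*=\min_i\mu_i$; $\Delta_i=\mu_i-\mu^*$, $\Delta_{\min}=\min_{i\ne i^*}\Delta_i$. Algorithm (with $\alpha>0$): select each arm once, then at timestep $t$ select $a_t=\arg\min_i\{\hat\rho_{i,T_i(t-1)}-b_{t,T_i(t-1)}\}$ with $b_{t,s}=(\theta^L)^{1/\xi}t^{\alpha/\xi}/s^{1-\eta}$, where $T_i(n)$ is the number of selections of arm $i$ during timesteps $1,\dots,n$. *)

theory Defs
  imports "HOL-Probability.Probability" "HOL-Library.Landau_Symbols"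
begin

text \<open>Arms are 1..K, states form a finite type 's, the sample space is M.
  Snext i k w : state observed after the k-th selection (k >= 1) of arm i.
  x i s t w   : the t-th cost (t >= 1) obtained after state s follows arm i.
  a t w       : arm selected at timestep t (t >= 1).\<close>

definition state_count :: "(nat \<Rightarrow> nat \<Rightarrow> 'w \<Rightarrow> 's) \<Rightarrow> nat \<Rightarrow> 's \<Rightarrow> nat \<Rightarrow> 'w \<Rightarrow> nat" where
  "state_count Snext i s n w = card {k \<in> {1..n}. Snext i k w = s}"

definition arm_count :: "(nat \<Rightarrow> 'w \<Rightarrow> nat) \<Rightarrow> nat \<Rightarrow> nat \<Rightarrow> 'w \<Rightarrow> nat" where
  "arm_count a i n w = card {t \<in> {1..n}. a t w = i}"

definition rho_hat_state ::
  "real \<Rightarrow> real \<Rightarrow> (nat \<Rightarrow> 's \<Rightarrow> nat \<Rightarrow> 'w \<Rightarrow> real) \<Rightarrow> nat \<Rightarrow> 's \<Rightarrow> nat \<Rightarrow> 'w \<Rightarrow> real" where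
  "rho_hat_state \<beta> \<gamma> x i s n w =
     1 / (\<beta> * \<gamma>) * ln (1 / real n * (\<Sum>t=1..n. exp (\<beta> * \<gamma> * x i s t w)))"

definition rho_hat_arm ::
  "real \<Rightarrow> real \<Rightarrow> (nat \<Rightarrow> real) \<Rightarrow> (nat \<Rightarrow> 's \<Rightarrow> nat \<Rightarrow> 'w \<Rightarrow> real)
   \<Rightarrow> (nat \<Rightarrow> nat \<Rightarrow> 'w \<Rightarrow> 's::finite) \<Rightarrow> nat \<Rightarrow> nat \<Rightarrow> 'w \<Rightarrow> real" where
  "rho_hat_arm \<beta> \<gamma> c x Snext i n w =
     1 / \<beta> * ln (1 / real n * (\<Sum>s\<in>UNIV. \<Sum>t=1..state_count Snext i s n w.
        exp (\<beta> * (c i + \<gamma> * x i s t w))))"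

definition mu_arm :: "real \<Rightarrow> real \<Rightarrow> (nat \<Rightarrow> real) \<Rightarrow> (nat \<Rightarrow> 's::finite pmf)
   \<Rightarrow> (nat \<Rightarrow> 's \<Rightarrow> real) \<Rightarrow> nat \<Rightarrow> real" where
  "mu_arm \<beta> \<gamma> c P mus i =
     1 / \<beta> * ln (\<Sum>s\<in>UNIV. pmf (P i) s * exp (\<beta> * (c i + \<gamma> * mus i s)))"

definition ucb_bonus :: "real \<Rightarrow> real \<Rightarrow> real \<Rightarrow> real \<Rightarrow> nat \<Rightarrow> nat \<Rightarrow> real" where
  "ucb_bonus \<theta>L \<xi> \<alpha> \<eta> t s = \<theta>L powr (1 / \<xi>) * real t powr (\<alpha> / \<xi>) / real s powr (1 - \<eta>)"

text \<open>The UCB rule: arms 1..K selected once at timesteps 1..K; afterwards the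
  selected arm is (some) minimiser of the lower confidence index (any tie-breaking).\<close>
definition ucb_run :: "nat \<Rightarrow> real \<Rightarrow> real \<Rightarrow> (nat \<Rightarrow> real) \<Rightarrow> (nat \<Rightarrow> 's \<Rightarrow> nat \<Rightarrow> 'w \<Rightarrow> real)
   \<Rightarrow> (nat \<Rightarrow> nat \<Rightarrow> 'w \<Rightarrow> 's::finite) \<Rightarrow> real \<Rightarrow> real \<Rightarrow> real \<Rightarrow> real
   \<Rightarrow> 'w set \<Rightarrow> (nat \<Rightarrow> 'w \<Rightarrow> nat) \<Rightarrow> bool" where
  "ucb_run K \<beta> \<gamma> c x Snext \<theta>L \<xi> \<alpha> \<eta> \<Omega> a \<longleftrightarrow>
     (\<forall>w\<in>\<Omega>. \<forall>t\<in>{1..K}. a t w = t) \<and>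
     (\<forall>w\<in>\<Omega>. \<forall>t>K. a t w \<in> {1..K} \<and>
        (\<forall>j\<in>{1..K}.
           rho_hat_arm \<beta> \<gamma> c x Snext (a t w) (arm_count a (a t w) (t - 1) w) w
             - ucb_bonus \<theta>L \<xi> \<alpha> \<eta> t (arm_count a (a t w) (t - 1) w)
           \<le> rho_hat_arm \<beta> \<gamma> c x Snext j (arm_count a j (t - 1) w) w
             - ucb_bonus \<theta>L \<xi> \<alpha> \<eta> t (arm_count a j (t - 1) w)))"

definition rho_stream :: "nat \<Rightarrow> real \<Rightarrow> real \<Rightarrow> (nat \<Rightarrow> real) \<Rightarrow> (nat \<Rightarrow> 's \<Rightarrow> nat \<Rightarrow> 'w \<Rightarrow> real)
   \<Rightarrow> (nat \<Rightarrow> nat \<Rightarrow> 'w \<Rightarrow> 's::finite) \<Rightarrow> (nat \<Rightarrow> 'w \<Rightarrow> nat) \<Rightarrow> nat \<Rightarrow> 'w \<Rightarrow> real" where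
  "rho_stream K \<beta> \<gamma> c x Snext a n w =
     1 / \<beta> * ln (1 / real n * (\<Sum>i=1..K. \<Sum>s\<in>UNIV.
        \<Sum>t=1..state_count Snext i s (arm_count a i n w) w.
          exp (\<beta> * (c i + \<gamma> * x i s t w))))"

end

theory Submission
  imports Defs
begin

text \<open>Let \<open>istar\<close> be the optimal arm and \<open>\<Delta>\<close> the smallest gap. If a suboptimal arm is
  pulled for the \<open>(u+1)\<close>-st time at some step \<open>t \<le> n\<close>, its lower confidence index did not
  exceed that of \<open>istar\<close>; once \<open>u\<close> is a large multiple of \<open>n powr \<eta>''\<close> the bonus is below
  \<open>\<Delta>/2\<close>, so either its own estimate after \<open>u\<close> pulls or that of \<open>istar\<close> after some \<open>m \<le> n\<close>
  pulls is off by a full bonus. By the tail bound for single arms this has probability at most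
  \<open>2 K n / u powr \<alpha>\<close>. Outside this event the stream estimator and the estimator of \<open>istar\<close>
  after \<open>n\<close> pulls average the same samples except for at most \<open>K u\<close> of them, and \<open>ln\<close> is
  Lipschitz on their common range, so the two differ by \<open>O (K u)\<close>. Choosing \<open>u\<close> proportional
  to \<open>n powr \<eta>'' * z\<close> transfers the tails of \<open>istar\<close> at level \<open>z/2\<close> to the stream estimator,
  up to \<open>O (z powr (1 - \<alpha>))\<close>. The bound on the expectation follows by summing these tails
  over integer levels.\<close>

lemma card_filter_atLeastAtMost_Suc:
  "card {k \<in> {1..Suc n}. P k} = card {k \<in> {1..n}. P k} + (if P (Suc n) then 1 else 0)"
proof -
  have "{k \<in> {1..Suc n}. P k} = {k \<in> {1..n}. P k} \<union> (if P (Suc n) then {Suc n} else {})"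
    by (auto simp: le_Suc_eq)
  then show ?thesis by auto
qed

lemma measurable_card_filter:
  fixes n :: nat
  assumes "\<And>k. k \<ge> 1 \<Longrightarrow> {w \<in> space M. P k w} \<in> sets M"
  shows "(\<lambda>w. card {k \<in> {1..n}. P k w}) \<in> M \<rightarrow>\<^sub>M count_space UNIV"
proof (induction n)
  case 0
  show ?case by simp
next
  case (Suc n)
  have "(\<lambda>w. (\<lambda>j w. if P (Suc n) w then j + 1 else j) (card {k \<in> {1..n}. P k w}) w)
      \<in> M \<rightarrow>\<^sub>M count_space UNIV"
  proof (rule measurable_compose_countable'[OF _ Suc])
    show "(\<lambda>w. if P (Suc n) w then j + 1 else j) \<in> M \<rightarrow>\<^sub>M count_space UNIV" for j :: nat
      by (rule measurable_If[OF measurable_const measurable_const assms]) simp_all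
  qed simp
  moreover have "(\<lambda>w. card {k \<in> {1..Suc n}. P k w})
      = (\<lambda>w. (\<lambda>j w. if P (Suc n) w then j + 1 else j) (card {k \<in> {1..n}. P k w}) w)"
    by (rule ext) (simp only: card_filter_atLeastAtMost_Suc, simp)
  ultimately show ?case by simp
qed

lemma sum_increment_bounds:
  fixes g :: "nat \<Rightarrow> real"
  assumes lo: "\<And>t. 1 \<le> t \<Longrightarrow> l \<le> g t" and hi: "\<And>t. 1 \<le> t \<Longrightarrow> g t \<le> h" and "N \<le> N'"
  shows "real (N' - N) * l \<le> (\<Sum>t=1..N'. g t) - (\<Sum>t=1..N. g t)"
    and "(\<Sum>t=1..N'. g t) - (\<Sum>t=1..N. g t) \<le> real (N' - N) * h"
proof -
  have diff: "(\<Sum>t=1..N'. g t) - (\<Sum>t=1..N. g t) = (\<Sum>t\<in>{1..N'} - {1..N}. g t)"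
    using \<open>N \<le> N'\<close> by (simp add: sum_diff)
  have card: "card ({1..N'} - {1..N}) = N' - N"
    using \<open>N \<le> N'\<close> by (simp add: card_Diff_subset)
  show "real (N' - N) * l \<le> (\<Sum>t=1..N'. g t) - (\<Sum>t=1..N. g t)"
    unfolding diff using sum_bounded_below[of "{1..N'} - {1..N}" l g] lo card by auto
  show "(\<Sum>t=1..N'. g t) - (\<Sum>t=1..N. g t) \<le> real (N' - N) * h"
    unfolding diff using sum_bounded_above[of "{1..N'} - {1..N}" g h] hi card by auto
qed

lemma abs_ln_diff_le:
  fixes p q m :: real
  assumes "0 < m" "m \<le> p" "m \<le> q"
  shows "\<bar>ln p - ln q\<bar> \<le> \<bar>p - q\<bar> / m"
proof -
  have one_side: "ln p - ln q \<le> \<bar>p - q\<bar> / m" if "m \<le> p" "m \<le> q" for p q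
  proof -
    have "ln p - ln q = ln (p / q)" using that \<open>0 < m\<close> by (simp add: ln_div)
    also have "\<dots> \<le> p / q - 1" using that \<open>0 < m\<close> by (intro ln_le_minus_one) auto
    also have "\<dots> = (p - q) / q" using that \<open>0 < m\<close> by (simp add: field_simps)
    also have "\<dots> \<le> \<bar>p - q\<bar> / m" using that \<open>0 < m\<close> by (simp add: frac_le)
    finally show ?thesis .
  qed
  show ?thesis using one_side[of p q] one_side[of q p] assms by (auto simp: abs_minus_commute)
qed

lemma abs_le_level_count:
  fixes v h B :: real
  assumes "0 < h" "\<bar>v\<bar> \<le> B"
  shows "\<bar>v\<bar> \<le> h * (1 + (\<Sum>k=1..nat \<lceil>B / h\<rceil>. of_bool (h * real k \<le> \<bar>v\<bar>)))"
proof -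
  define j where "j = nat \<lfloor>\<bar>v\<bar> / h\<rfloor>"
  have j_eq: "real j = of_int \<lfloor>\<bar>v\<bar> / h\<rfloor>" unfolding j_def using \<open>0 < h\<close> by simp
  have "real j \<le> \<bar>v\<bar> / h" unfolding j_eq by linarith
  moreover have "\<bar>v\<bar> / h < real j + 1" unfolding j_eq by linarith
  ultimately have j_v: "h * real j \<le> \<bar>v\<bar>" and v_lt: "\<bar>v\<bar> < h * (real j + 1)"
    using \<open>0 < h\<close> by (simp_all add: field_simps)
  have "\<bar>v\<bar> / h \<le> B / h" using assms by (simp add: divide_right_mono)
  then have j_le: "j \<le> nat \<lceil>B / h\<rceil>" unfolding j_def by linarith
  have "real j = (\<Sum>k=1..j. of_bool (h * real k \<le> \<bar>v\<bar>) :: real)"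
  proof -
    have "h * real k \<le> \<bar>v\<bar>" if "k \<in> {1..j}" for k
    proof -
      have "h * real k \<le> h * real j" using that \<open>0 < h\<close> by simp
      also have "\<dots> \<le> \<bar>v\<bar>" by (rule j_v)
      finally show ?thesis .
    qed
    then show ?thesis by simp
  qed
  also have "\<dots> \<le> (\<Sum>k=1..nat \<lceil>B / h\<rceil>. of_bool (h * real k \<le> \<bar>v\<bar>))"
    using j_le by (intro sum_mono2) auto
  finally have "h * (real j + 1) \<le> h * (1 + (\<Sum>k=1..nat \<lceil>B / h\<rceil>. of_bool (h * real k \<le> \<bar>v\<bar>)))"
    using \<open>0 < h\<close> by simp
  then show ?thesis using v_lt by linarith
qed

lemma (in prob_space) integral_abs_le_of_tails:
  fixes f :: "'a \<Rightarrow> real"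
  assumes [measurable]: "f \<in> borel_measurable M"
    and bounded: "\<And>w. w \<in> space M \<Longrightarrow> \<bar>f w\<bar> \<le> B"
    and "0 < h" "1 < p" "0 \<le> \<theta>"
    and upper: "\<And>z. 1 \<le> z \<Longrightarrow> measure M {w \<in> space M. h * z \<le> f w} \<le> \<theta> / z powr p"
    and lower: "\<And>z. 1 \<le> z \<Longrightarrow> measure M {w \<in> space M. f w \<le> - (h * z)} \<le> \<theta> / z powr p"
  shows "(\<integral>w. \<bar>f w\<bar> \<partial>M) \<le> h * (1 + 2 * \<theta> * (\<Sum>k. real k powr - p))"
proof -
  define N where "N = nat \<lceil>B / h\<rceil>"
  define A where "A k = {w \<in> space M. h * real k \<le> \<bar>f w\<bar>}" for k :: nat
  have A_sets: "A k \<in> sets M" for k unfolding A_def by measurable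
  have measure_A: "measure M (A k) \<le> 2 * \<theta> * real k powr - p" if "1 \<le> k" for k
  proof -
    have sets: "{w \<in> space M. h * real k \<le> f w} \<in> sets M" "{w \<in> space M. f w \<le> - (h * real k)} \<in> sets M"
      by measurable
    have "A k = {w \<in> space M. h * real k \<le> f w} \<union> {w \<in> space M. f w \<le> - (h * real k)}"
      unfolding A_def by auto
    then have "measure M (A k) \<le> measure M {w \<in> space M. h * real k \<le> f w} + measure M {w \<in> space M. f w \<le> - (h * real k)}"
      using measure_Un_le[OF sets] by simp
    also have "\<dots> \<le> \<theta> / real k powr p + \<theta> / real k powr p"
      using upper[of k] lower[of k] that by simp
    finally show ?thesis using that by (simp add: powr_minus divide_inverse)
  qed
  have summable: "summable (\<lambda>k. real k powr - p)"
    using \<open>1 < p\<close> by (subst summable_real_powr_iff) simp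
  have "(\<integral>w. \<bar>f w\<bar> \<partial>M) \<le> (\<integral>w. h * (1 + (\<Sum>k=1..N. indicator (A k) w)) \<partial>M)"
  proof (rule integral_mono)
    show "integrable M (\<lambda>w. \<bar>f w\<bar>)"
      using bounded by (intro integrable_const_bound[where B = B]) auto
    show "integrable M (\<lambda>w. h * (1 + (\<Sum>k=1..N. indicator (A k) w)))"
      using A_sets by (intro integrable_mult_right integrable_add integrable_sum integrable_real_indicator)
        (auto simp: less_top[symmetric])
    show "\<bar>f w\<bar> \<le> h * (1 + (\<Sum>k=1..N. indicator (A k) w))" if "w \<in> space M" for w
      using abs_le_level_count[OF \<open>0 < h\<close> bounded[OF that]] that
      unfolding N_def A_def by (simp add: indicator_def)
  qed
  also have "\<dots> = h * (1 + (\<Sum>k=1..N. measure M (A k)))"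
    using A_sets by (simp add: integrable_real_indicator integrable_sum less_top[symmetric] prob_space)
  also have "\<dots> \<le> h * (1 + 2 * \<theta> * (\<Sum>k=1..N. real k powr - p))"
    using measure_A \<open>0 < h\<close> by (simp add: sum_distrib_left) (auto intro!: sum_mono)
  also have "\<dots> \<le> h * (1 + 2 * \<theta> * (\<Sum>k. real k powr - p))"
    using sum_le_suminf[OF summable, of "{1..N}"] \<open>0 < h\<close> \<open>0 \<le> \<theta>\<close>
    by (simp add: mult_left_mono)
  finally show ?thesis .
qed

lemma (in prob_space) measure_le_powr_if_large:
  assumes "0 < z" "0 \<le> p" "C \<le> \<theta>" "Z powr p \<le> \<theta>"
    and large: "Z \<le> z \<Longrightarrow> measure M S \<le> C / z powr p"
  shows "measure M S \<le> \<theta> / z powr p"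
proof (cases "Z \<le> z")
  case True
  have "C / z powr p \<le> \<theta> / z powr p" using \<open>C \<le> \<theta>\<close> by (simp add: divide_right_mono)
  then show ?thesis using large[OF True] by linarith
next
  case False
  have "z powr p \<le> Z powr p" using False \<open>0 < z\<close> \<open>0 \<le> p\<close> by (intro powr_mono2) auto
  then have "1 \<le> \<theta> / z powr p" using \<open>Z powr p \<le> \<theta>\<close> \<open>0 < z\<close> by simp
  moreover have "measure M S \<le> 1" by (rule prob_le_1)
  ultimately show ?thesis by linarith
qed

lemma (in finite_measure) measure_tails_le_of_close:
  fixes f g :: "'a \<Rightarrow> real"
  assumes sets: "{w \<in> space M. e \<le> g w} \<in> sets M" "{w \<in> space M. g w \<le> - e} \<in> sets M" "U \<in> sets M"
    and close: "\<And>w. w \<in> space M \<Longrightarrow> w \<notin> U \<Longrightarrow> \<bar>f w - g w\<bar> \<le> d" and "d + e \<le> r"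
  shows "measure M {w \<in> space M. r \<le> f w} \<le> measure M {w \<in> space M. e \<le> g w} + measure M U"
    and "measure M {w \<in> space M. f w \<le> - r} \<le> measure M {w \<in> space M. g w \<le> - e} + measure M U"
proof -
  have close': "f w \<le> g w + d \<and> g w \<le> f w + d" if "w \<in> space M" "w \<notin> U" for w
    using close[OF that] by (simp add: abs_le_iff)
  have "{w \<in> space M. r \<le> f w} \<subseteq> {w \<in> space M. e \<le> g w} \<union> U"
  proof
    fix w assume "w \<in> {w \<in> space M. r \<le> f w}"
    then show "w \<in> {w \<in> space M. e \<le> g w} \<union> U"
      using close'[of w] \<open>d + e \<le> r\<close> by (cases "w \<in> U") auto
  qed
  then show "measure M {w \<in> space M. r \<le> f w} \<le> measure M {w \<in> space M. e \<le> g w} + measure M U"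
    using sets by (meson finite_measure_mono measure_Un_le order_trans sets.Un)
  have "{w \<in> space M. f w \<le> - r} \<subseteq> {w \<in> space M. g w \<le> - e} \<union> U"
  proof
    fix w assume "w \<in> {w \<in> space M. f w \<le> - r}"
    then show "w \<in> {w \<in> space M. g w \<le> - e} \<union> U"
      using close'[of w] \<open>d + e \<le> r\<close> by (cases "w \<in> U") auto
  qed
  then show "measure M {w \<in> space M. f w \<le> - r} \<le> measure M {w \<in> space M. g w \<le> - e} + measure M U"
    using sets by (meson finite_measure_mono measure_Un_le order_trans sets.Un)
qed

locale ucb_bandit = prob_space M for M :: "'w measure" +
  fixes K :: nat and \<beta> \<gamma> Rc Rx :: real
    and c :: "nat \<Rightarrow> real"
    and P :: "nat \<Rightarrow> 's::finite pmf"
    and Snext :: "nat \<Rightarrow> nat \<Rightarrow> 'w \<Rightarrow> 's"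
    and x :: "nat \<Rightarrow> 's \<Rightarrow> nat \<Rightarrow> 'w \<Rightarrow> real"
    and mus :: "nat \<Rightarrow> 's \<Rightarrow> real"
    and \<xi> \<eta> \<alpha> \<theta>L :: real
    and a :: "nat \<Rightarrow> 'w \<Rightarrow> nat"
  assumes K: "K \<ge> 1"
    and \<beta>: "\<beta> > 0" and \<gamma>: "0 < \<gamma>" "\<gamma> \<le> 1"
    and c_bd: "\<And>i. i \<in> {1..K} \<Longrightarrow> \<bar>c i\<bar> \<le> Rc"
    and x_meas: "\<And>i s t. i \<in> {1..K} \<Longrightarrow> x i s t \<in> borel_measurable M"
    and x_bd: "\<And>i s t w. i \<in> {1..K} \<Longrightarrow> t \<ge> 1 \<Longrightarrow> w \<in> space M \<Longrightarrow> \<bar>x i s t w\<bar> \<le> Rx"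
    and S_meas: "\<And>i k. i \<in> {1..K} \<Longrightarrow> k \<ge> 1 \<Longrightarrow> Snext i k \<in> measurable M (count_space UNIV)"
    and \<xi>: "\<xi> > 1" and \<eta>: "1/2 \<le> \<eta>" "\<eta> < 1"
    and \<alpha>: "\<alpha> > 2" "\<xi> * \<eta> * (1 - \<eta>) \<le> \<alpha>" "\<alpha> < \<xi> * (1 - \<eta>)"
    and \<theta>L: "\<theta>L > 1"
    and tail_arm_up: "\<And>i n z. i \<in> {1..K} \<Longrightarrow> n \<ge> 1 \<Longrightarrow> z \<ge> 1 \<Longrightarrow>
          measure M {w \<in> space M. real n * rho_hat_arm \<beta> \<gamma> c x Snext i n w
                                    - real n * mu_arm \<beta> \<gamma> c P mus i
                                    \<ge> real n powr \<eta> * z} \<le> \<theta>L / z powr \<xi>"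
    and tail_arm_lo: "\<And>i n z. i \<in> {1..K} \<Longrightarrow> n \<ge> 1 \<Longrightarrow> z \<ge> 1 \<Longrightarrow>
          measure M {w \<in> space M. real n * rho_hat_arm \<beta> \<gamma> c x Snext i n w
                                    - real n * mu_arm \<beta> \<gamma> c P mus i
                                    \<le> - (real n powr \<eta> * z)} \<le> \<theta>L / z powr \<xi>"
    and unique_opt: "\<exists>!i. i \<in> {1..K} \<and>
                       mu_arm \<beta> \<gamma> c P mus i = Min (mu_arm \<beta> \<gamma> c P mus ` {1..K})"
    and a_meas: "\<And>t. a t \<in> measurable M (count_space UNIV)"
    and run: "ucb_run K \<beta> \<gamma> c x Snext \<theta>L \<xi> \<alpha> \<eta> (space M) a"
begin

abbreviation "mu \<equiv> mu_arm \<beta> \<gamma> c P mus"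
abbreviation "mustar \<equiv> Min (mu ` {1..K})"
abbreviation "rho_hat \<equiv> rho_hat_arm \<beta> \<gamma> c x Snext"
abbreviation "stream \<equiv> rho_stream K \<beta> \<gamma> c x Snext a"
abbreviation "T \<equiv> arm_count a"
abbreviation "bonus \<equiv> ucb_bonus \<theta>L \<xi> \<alpha> \<eta>"
abbreviation "\<eta>'' \<equiv> \<alpha> / (\<xi> * (1 - \<eta>))"
abbreviation "R \<equiv> Rc + Rx"
abbreviation "exp_cost i s t w \<equiv> exp (\<beta> * (c i + \<gamma> * x i s t w))"
abbreviation "exp_cost_sum i m w \<equiv>
  \<Sum>s\<in>UNIV. \<Sum>t=1..state_count Snext i s m w. exp_cost i s t w"
abbreviation "exp_cost_total n w \<equiv> \<Sum>i=1..K. exp_cost_sum i (T i n w) w"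

definition istar :: nat where
  "istar = (THE i. i \<in> {1..K} \<and> mu i = mustar)"

lemma istar: "istar \<in> {1..K}" "mu istar = mustar"
  using theI'[OF unique_opt] unfolding istar_def by auto

lemma mustar_lt: "i \<in> {1..K} \<Longrightarrow> i \<noteq> istar \<Longrightarrow> mustar < mu i"
  using unique_opt istar by (metis Min_le finite_atLeastAtMost finite_imageI image_eqI order_le_less)

text \<open>The element \<open>1\<close> only keeps the minimum well-defined when there is no suboptimal arm.\<close>
definition \<Delta> :: real where
  "\<Delta> = Min (insert 1 ((\<lambda>i. mu i - mustar) ` ({1..K} - {istar})))"

lemma gap_pos: "\<Delta> > 0"
  unfolding \<Delta>_def using mustar_lt by (subst Min_gr_iff) auto

lemma gap_le: "i \<in> {1..K} \<Longrightarrow> i \<noteq> istar \<Longrightarrow> \<Delta> \<le> mu i - mustar"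
  unfolding \<Delta>_def by (intro Min_le) auto

lemma arm_init: "w \<in> space M \<Longrightarrow> t \<in> {1..K} \<Longrightarrow> a t w = t"
  using run unfolding ucb_run_def by blast

lemma arm_range: "w \<in> space M \<Longrightarrow> 1 \<le> t \<Longrightarrow> a t w \<in> {1..K}"
  using run unfolding ucb_run_def by (cases "t \<le> K") auto

lemma arm_selection:
  "w \<in> space M \<Longrightarrow> K < t \<Longrightarrow> j \<in> {1..K} \<Longrightarrow>
     rho_hat (a t w) (T (a t w) (t - 1) w) w - bonus t (T (a t w) (t - 1) w)
       \<le> rho_hat j (T j (t - 1) w) w - bonus t (T j (t - 1) w)"
  using run unfolding ucb_run_def by blast

lemma arm_count_Suc: "T i (Suc n) w = T i n w + (if a (Suc n) w = i then 1 else 0)"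
  unfolding arm_count_def by (rule card_filter_atLeastAtMost_Suc)

lemma arm_count_le: "T i n w \<le> n"
proof -
  have "T i n w \<le> card {1..n}" unfolding arm_count_def by (intro card_mono) auto
  then show ?thesis by simp
qed

lemma arm_count_mono: "n \<le> n' \<Longrightarrow> T i n w \<le> T i n' w"
  unfolding arm_count_def by (intro card_mono) auto

lemma arm_count_init:
  assumes "w \<in> space M" "n \<le> K"
  shows "T i n w = (if i \<in> {1..n} then 1 else 0)"
proof -
  have "{t \<in> {1..n}. a t w = i} = (if i \<in> {1..n} then {i} else {})"
    using arm_init[OF assms(1)] assms(2) by auto
  then show ?thesis unfolding arm_count_def by simp
qed

lemma sum_arm_count:
  assumes "w \<in> space M"
  shows "(\<Sum>i=1..K. real (T i n w)) = real n"
proof -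
  have "(\<lambda>t. a t w) ` {1..n} \<subseteq> {1..K}" using arm_range[OF assms] by auto
  then show ?thesis
    using sum.group[of "{1..n}" "{1..K}" "\<lambda>t. a t w" "\<lambda>_. 1::real"] unfolding arm_count_def by simp
qed

lemma suboptimal_pulls_eq:
  "w \<in> space M \<Longrightarrow> real n - real (T istar n w) = (\<Sum>i\<in>{1..K} - {istar}. real (T i n w))"
  using sum_arm_count[of w n] istar(1) by (simp add: sum.remove)

lemma sum_state_count: "(\<Sum>s\<in>UNIV. real (state_count Snext i s m w)) = real m"
  using sum.group[of "{1..m}" UNIV "\<lambda>k. Snext i k w" "\<lambda>_. 1::real"]
  unfolding state_count_def by auto

lemma state_count_mono: "m \<le> m' \<Longrightarrow> state_count Snext i s m w \<le> state_count Snext i s m' w"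
  unfolding state_count_def by (intro card_mono) auto

lemma pull_crossing:
  assumes "u < T i n w"
  obtains t where "t \<in> {1..n}" "a t w = i" "T i (t - 1) w = u"
  using assms
proof (induction n)
  case 0
  then show ?case unfolding arm_count_def by simp
next
  case (Suc n)
  show ?case
  proof (cases "u < T i n w")
    case True
    then show ?thesis using Suc.IH Suc.prems(1) by force
  next
    case False
    then have "a (Suc n) w = i" "T i n w = u"
      using Suc.prems(2) arm_count_Suc[of i n w] by (auto split: if_splits)
    then show ?thesis using Suc.prems(1) by force
  qed
qed

subsection \<open>Sums of exponentiated costs\<close>

lemma measurable_arm_count: "(\<lambda>w. T i n w) \<in> M \<rightarrow>\<^sub>M count_space UNIV"
  unfolding arm_count_def
proof (rule measurable_card_filter)
  show "{w \<in> space M. a k w = i} \<in> sets M" for k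
    using measurable_sets[OF a_meas[of k], of "{i}"] by (simp add: vimage_def Int_def conj_commute)
qed

lemma measurable_exp_cost_sum:
  assumes i: "i \<in> {1..K}" and g: "g \<in> M \<rightarrow>\<^sub>M count_space UNIV"
  shows "(\<lambda>w. exp_cost_sum i (g w) w) \<in> borel_measurable M"
proof (rule measurable_compose_countable'[OF _ g])
  note [measurable] = x_meas[OF i]
  fix m :: nat
  have "(\<lambda>w. state_count Snext i s m w) \<in> M \<rightarrow>\<^sub>M count_space UNIV" for s
    unfolding state_count_def
  proof (rule measurable_card_filter)
    show "{w \<in> space M. Snext i k w = s} \<in> sets M" if "k \<ge> 1" for k
      using measurable_sets[OF S_meas[OF i that], of "{s}"] by (simp add: vimage_def Int_def conj_commute)
  qed
  then show "(\<lambda>w. exp_cost_sum i m w) \<in> borel_measurable M"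
    by (intro borel_measurable_sum measurable_compose_countable'[where f = "\<lambda>N w. \<Sum>t=1..N. exp_cost i s t w" for s])
      auto
qed simp

lemma measurable_rho_hat: "i \<in> {1..K} \<Longrightarrow> rho_hat i m \<in> borel_measurable M"
  using measurable_exp_cost_sum[of i "\<lambda>_. m"] unfolding rho_hat_arm_def by measurable

lemma measurable_stream: "stream n \<in> borel_measurable M"
proof -
  have "(\<lambda>w. exp_cost_total n w) \<in> borel_measurable M"
    by (intro borel_measurable_sum measurable_exp_cost_sum measurable_arm_count) auto
  then show ?thesis unfolding rho_stream_def by measurable
qed

lemma exp_cost_bounds:
  assumes "i \<in> {1..K}" "1 \<le> t" "w \<in> space M"
  shows "exp (- (\<beta> * R)) \<le> exp_cost i s t w" "exp_cost i s t w \<le> exp (\<beta> * R)"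
proof -
  have "\<bar>\<gamma> * x i s t w\<bar> \<le> \<bar>x i s t w\<bar>" using \<gamma> by (simp add: abs_mult mult_left_le_one_le)
  then have "\<bar>c i + \<gamma> * x i s t w\<bar> \<le> R"
    using c_bd[OF assms(1)] x_bd[OF assms, of s] abs_triangle_ineq[of "c i" "\<gamma> * x i s t w"] by linarith
  then have "\<bar>\<beta> * (c i + \<gamma> * x i s t w)\<bar> \<le> \<beta> * R" using \<beta> by (simp add: abs_mult)
  then show "exp (- (\<beta> * R)) \<le> exp_cost i s t w" "exp_cost i s t w \<le> exp (\<beta> * R)" by auto
qed

lemma exp_cost_sum_increment:
  assumes "i \<in> {1..K}" "w \<in> space M" "m \<le> m'"
  shows "real (m' - m) * exp (- (\<beta> * R)) \<le> exp_cost_sum i m' w - exp_cost_sum i m w"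
    and "exp_cost_sum i m' w - exp_cost_sum i m w \<le> real (m' - m) * exp (\<beta> * R)"
proof -
  let ?N = "\<lambda>m s. state_count Snext i s m w"
  let ?D = "\<lambda>s. (\<Sum>t=1..?N m' s. exp_cost i s t w) - (\<Sum>t=1..?N m s. exp_cost i s t w)"
  have diff: "exp_cost_sum i m' w - exp_cost_sum i m w = (\<Sum>s\<in>UNIV. ?D s)"
    by (simp add: sum_subtractf)
  have count: "real (m' - m) = (\<Sum>s\<in>UNIV. real (?N m' s - ?N m s))"
    using sum_state_count[of i m' w] sum_state_count[of i m w] state_count_mono[OF assms(3)] assms(3)
    by (simp add: of_nat_diff sum_subtractf)
  note bounds = exp_cost_bounds[OF assms(1) _ assms(2)]
    and increments = sum_increment_bounds[where l = "exp (- (\<beta> * R))" and h = "exp (\<beta> * R)"]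
  show "real (m' - m) * exp (- (\<beta> * R)) \<le> exp_cost_sum i m' w - exp_cost_sum i m w"
    unfolding diff count sum_distrib_right
    by (intro sum_mono increments bounds state_count_mono assms(3))
  show "exp_cost_sum i m' w - exp_cost_sum i m w \<le> real (m' - m) * exp (\<beta> * R)"
    unfolding diff count sum_distrib_right
    by (intro sum_mono increments bounds state_count_mono assms(3))
qed

lemma exp_cost_sum_bounds:
  assumes "i \<in> {1..K}" "w \<in> space M"
  shows "real m * exp (- (\<beta> * R)) \<le> exp_cost_sum i m w" "exp_cost_sum i m w \<le> real m * exp (\<beta> * R)"
  using exp_cost_sum_increment[OF assms, of 0 m] by (simp_all add: state_count_def)

lemma exp_cost_total_bounds:
  assumes "w \<in> space M"
  shows "real n * exp (- (\<beta> * R)) \<le> exp_cost_total n w" "exp_cost_total n w \<le> real n * exp (\<beta> * R)"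
  using sum_mono[of "{1..K}" "\<lambda>i. real (T i n w) * exp (- (\<beta> * R))" "\<lambda>i. exp_cost_sum i (T i n w) w"]
    sum_mono[of "{1..K}" "\<lambda>i. exp_cost_sum i (T i n w) w" "\<lambda>i. real (T i n w) * exp (\<beta> * R)"]
    exp_cost_sum_bounds[OF _ assms] sum_arm_count[OF assms, of n]
  by (simp_all add: sum_distrib_right[symmetric])

lemma exp_cost_total_minus_optimal:
  assumes "w \<in> space M"
  shows "0 \<le> exp_cost_total n w - exp_cost_sum istar (T istar n w) w"
    and "exp_cost_total n w - exp_cost_sum istar (T istar n w) w
           \<le> (real n - real (T istar n w)) * exp (\<beta> * R)"
proof -
  have "exp_cost_total n w
      = exp_cost_sum istar (T istar n w) w + (\<Sum>i\<in>{1..K} - {istar}. exp_cost_sum i (T i n w) w)"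
    by (rule sum.remove) (use istar(1) in auto)
  then have split: "exp_cost_total n w - exp_cost_sum istar (T istar n w) w
      = (\<Sum>i\<in>{1..K} - {istar}. exp_cost_sum i (T i n w) w)"
    by linarith
  show "0 \<le> exp_cost_total n w - exp_cost_sum istar (T istar n w) w"
    unfolding split
    by (intro sum_nonneg order_trans[OF _ exp_cost_sum_bounds(1)[OF _ assms]]) auto
  show "exp_cost_total n w - exp_cost_sum istar (T istar n w) w
      \<le> (real n - real (T istar n w)) * exp (\<beta> * R)"
    unfolding split suboptimal_pulls_eq[OF assms] sum_distrib_right
    using exp_cost_sum_bounds(2)[OF _ assms] by (intro sum_mono) auto
qed

definition L :: real where
  "L = exp (2 * \<beta> * R) / \<beta>"

lemma L_pos: "L > 0"
  unfolding L_def using \<beta> by simp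

text \<open>Both sums of exponentiated costs contain the first \<open>T istar n\<close> samples of \<open>istar\<close> and
  otherwise at most \<open>n - T istar n\<close> terms, each below \<open>exp (\<beta> * R)\<close>; both are at least
  \<open>n * exp (- \<beta> * R)\<close>, where \<open>ln\<close> has Lipschitz constant \<open>exp (\<beta> * R) / n\<close>.\<close>
lemma stream_close_to_optimal_arm:
  assumes w: "w \<in> space M" and n: "1 \<le> n"
  shows "\<bar>real n * stream n w - real n * rho_hat istar n w\<bar> \<le> L * (real n - real (T istar n w))"
proof -
  define d where "d = real n - real (T istar n w)"
  define G where "G = exp_cost_total n w"
  define H where "H = exp_cost_sum istar n w"
  define A where "A = exp_cost_sum istar (T istar n w) w"
  define lo where "lo = real n * exp (- (\<beta> * R))"
  have "0 \<le> d * exp (- (\<beta> * R))" using arm_count_le[of istar n w] unfolding d_def by simp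
  moreover have "0 \<le> G - A" "G - A \<le> d * exp (\<beta> * R)"
    using exp_cost_total_minus_optimal[OF w, of n] unfolding G_def A_def d_def by auto
  moreover have "d * exp (- (\<beta> * R)) \<le> H - A" "H - A \<le> d * exp (\<beta> * R)"
    using exp_cost_sum_increment[OF istar(1) w arm_count_le[of istar n w]] arm_count_le[of istar n w]
    unfolding H_def A_def d_def by (simp_all add: of_nat_diff)
  ultimately have "\<bar>G - H\<bar> \<le> d * exp (\<beta> * R)" by linarith
  moreover have "0 < lo" "lo \<le> G" "lo \<le> H"
    using n exp_cost_total_bounds(1)[OF w, of n] exp_cost_sum_bounds(1)[OF istar(1) w, of n]
    unfolding lo_def G_def H_def by auto
  ultimately have ln_diff: "\<bar>ln G - ln H\<bar> \<le> d * exp (\<beta> * R) / lo"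
    using abs_ln_diff_le[of lo G H] by (meson divide_right_mono less_imp_le order_trans)
  have "ln (1 / real n * G) - ln (1 / real n * H) = ln G - ln H"
    using \<open>0 < lo\<close> \<open>lo \<le> G\<close> \<open>lo \<le> H\<close> n by (simp add: ln_div)
  moreover have "real n * (1 / \<beta> * X) - real n * (1 / \<beta> * Y) = real n / \<beta> * (X - Y)" for X Y
    using \<beta> by (simp add: field_simps)
  ultimately have "real n * stream n w - real n * rho_hat istar n w = real n / \<beta> * (ln G - ln H)"
    unfolding rho_stream_def rho_hat_arm_def G_def[symmetric] H_def[symmetric] by simp
  then have "\<bar>real n * stream n w - real n * rho_hat istar n w\<bar> = real n / \<beta> * \<bar>ln G - ln H\<bar>"
    using \<beta> by (simp add: abs_mult)
  also have "\<dots> \<le> real n / \<beta> * (d * exp (\<beta> * R) / lo)"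
    using ln_diff \<beta> by (intro mult_left_mono) auto
  also have "\<dots> = L * d"
    using n \<beta> unfolding L_def lo_def by (simp add: field_simps exp_minus flip: exp_add)
  finally show ?thesis unfolding d_def .
qed

lemma stream_bounded:
  assumes w: "w \<in> space M" and n: "1 \<le> n"
  shows "\<bar>stream n w\<bar> \<le> R"
proof -
  define q where "q = 1 / real n * exp_cost_total n w"
  have q_bounds: "exp (- (\<beta> * R)) \<le> q" "q \<le> exp (\<beta> * R)"
    using exp_cost_total_bounds[OF w, of n] n unfolding q_def by (simp_all add: field_simps)
  then have "0 < q" by (meson exp_gt_zero order_less_le_trans)
  have "- (\<beta> * R) \<le> ln q" using q_bounds(1) \<open>0 < q\<close> by (simp add: ln_ge_iff)
  moreover have "ln q \<le> \<beta> * R"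
    using q_bounds(2) \<open>0 < q\<close> by (subst exp_le_cancel_iff[symmetric]) simp
  ultimately show ?thesis unfolding rho_stream_def q_def[symmetric] using \<beta> by (simp add: abs_le_iff field_simps)
qed

subsection \<open>Over-pulled suboptimal arms\<close>

lemma eta''_bounds: "\<eta> \<le> \<eta>''" "0 < \<eta>''" "\<eta>'' < 1" "1 \<le> \<eta>'' * \<alpha>"
proof -
  have pos: "0 < \<xi> * (1 - \<eta>)" using \<xi> \<eta> by simp
  show "\<eta> \<le> \<eta>''" using pos \<alpha>(2) by (simp add: field_simps mult.commute mult.left_commute)
  show "0 < \<eta>''" using \<open>\<eta> \<le> \<eta>''\<close> \<eta> by linarith
  show "\<eta>'' < 1" using pos \<alpha>(3) by (simp add: field_simps)
  have half: "1/2 \<le> \<eta>''" using \<open>\<eta> \<le> \<eta>''\<close> \<eta> by linarith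
  have "1/2 * 2 \<le> \<eta>'' * \<alpha>" by (rule mult_mono[OF half]) (use \<alpha> half in linarith)+
  then show "1 \<le> \<eta>'' * \<alpha>" by simp
qed

lemma alpha_le: "\<alpha> - 1 \<le> \<xi>"
proof -
  have "\<xi> * (1 - \<eta>) \<le> \<xi>" using \<xi> \<eta> by (simp add: mult_left_le_one_le)
  then show ?thesis using \<alpha>(3) by linarith
qed

definition dev_level :: "nat \<Rightarrow> real" where
  "dev_level t = \<theta>L powr (1 / \<xi>) * real t powr (\<alpha> / \<xi>)"

lemma dev_level_mono: "u \<le> t \<Longrightarrow> dev_level u \<le> dev_level t"
  unfolding dev_level_def using \<alpha> \<xi> by (intro mult_left_mono powr_mono2) auto

lemma dev_level_ge_1: "1 \<le> u \<Longrightarrow> 1 \<le> dev_level u"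
  unfolding dev_level_def using \<theta>L \<xi> \<alpha> by (intro mult_ge1_I ge_one_powr_ge_zero) auto

lemma tail_at_dev_level: "1 \<le> u \<Longrightarrow> \<theta>L / dev_level u powr \<xi> = 1 / real u powr \<alpha>"
  unfolding dev_level_def using \<theta>L \<xi> by (simp add: powr_mult powr_powr)

lemma count_mult_bonus:
  assumes "1 \<le> m"
  shows "real m * bonus t m = real m powr \<eta> * dev_level t"
proof -
  have "real m powr \<eta> = real m powr (1 - (1 - \<eta>))" by simp
  also have "\<dots> = real m powr 1 / real m powr (1 - \<eta>)" by (rule powr_diff)
  finally have "real m / real m powr (1 - \<eta>) = real m powr \<eta>" using assms by simp
  moreover have "real m * bonus t m = real m / real m powr (1 - \<eta>) * dev_level t"
    unfolding ucb_bonus_def dev_level_def by simp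
  ultimately show ?thesis by simp
qed

definition U0 :: real where
  "U0 = (2 * \<theta>L powr (1 / \<xi>) / \<Delta>) powr (1 / (1 - \<eta>))"

lemma U0_nonneg: "0 \<le> U0"
  unfolding U0_def by simp

lemma bonus_le_half_gap:
  assumes u: "1 \<le> u" "U0 * real n powr \<eta>'' \<le> real u" and "t \<le> n"
  shows "2 * bonus t u \<le> \<Delta>"
proof -
  have e: "0 < 1 - \<eta>" using \<eta> by simp
  have "U0 powr (1 - \<eta>) = 2 * \<theta>L powr (1 / \<xi>) / \<Delta>"
    unfolding U0_def using e gap_pos \<theta>L by (simp add: powr_powr)
  moreover have "(real n powr \<eta>'') powr (1 - \<eta>) = real n powr (\<alpha> / \<xi>)"
    using e \<xi> by (simp add: powr_powr)
  moreover have "(U0 * real n powr \<eta>'') powr (1 - \<eta>) \<le> real u powr (1 - \<eta>)"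
    using u e unfolding U0_def by (intro powr_mono2) auto
  ultimately have "2 * dev_level n / \<Delta> \<le> real u powr (1 - \<eta>)"
    unfolding U0_def dev_level_def by (simp add: powr_mult)
  then have "2 * dev_level n \<le> \<Delta> * real u powr (1 - \<eta>)"
    using gap_pos by (simp add: field_simps)
  moreover have "dev_level t \<le> dev_level n" by (rule dev_level_mono[OF \<open>t \<le> n\<close>])
  ultimately have "2 * dev_level t \<le> \<Delta> * real u powr (1 - \<eta>)" by linarith
  then show ?thesis unfolding ucb_bonus_def dev_level_def using u(1) by (simp add: field_simps)
qed

definition under_event :: "nat \<Rightarrow> nat \<Rightarrow> 'w set" where
  "under_event i u = {w \<in> space M.
     real u * rho_hat i u w - real u * mu i \<le> - (real u powr \<eta> * dev_level u)}"

definition over_event :: "nat \<Rightarrow> nat \<Rightarrow> 'w set" where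
  "over_event m u = {w \<in> space M.
     real m * rho_hat istar m w - real m * mu istar \<ge> real m powr \<eta> * dev_level u}"

definition bad_event :: "nat \<Rightarrow> nat \<Rightarrow> 'w set" where
  "bad_event n u = (\<Union>i\<in>{1..K} - {istar}. under_event i u) \<union> (\<Union>m\<in>{1..n}. over_event m u)"

lemma overpull_comparison:
  assumes w: "w \<in> space M" and u: "1 \<le> u" and pulls: "u < T i n w"
  obtains t m where "K < t" "u < t" "t \<le> n" "1 \<le> m" "m \<le> n"
    "rho_hat i u w - bonus t u \<le> rho_hat istar m w - bonus t m"
proof -
  obtain t where t: "t \<in> {1..n}" "a t w = i" "T i (t - 1) w = u"
    using pull_crossing[OF pulls] by blast
  have "K < t"
  proof (rule ccontr)
    assume "\<not> K < t"
    then have "a t w = t" "T i (t - 1) w = (if i \<in> {1..t - 1} then 1 else 0)"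
      using arm_init[OF w] arm_count_init[OF w, of "t - 1"] t(1) by auto
    then show False using t u by (auto split: if_split_asm)
  qed
  moreover have "u < t" using arm_count_le[of i "t - 1" w] t \<open>K < t\<close> by auto
  moreover have "1 \<le> T istar (t - 1) w"
    using arm_count_mono[of K "t - 1" istar w] arm_count_init[OF w order.refl, of istar] istar(1) \<open>K < t\<close>
    by auto
  moreover have "T istar (t - 1) w \<le> n" using arm_count_le[of istar "t - 1" w] t(1) by auto
  moreover have "rho_hat i u w - bonus t u \<le> rho_hat istar (T istar (t - 1) w) w - bonus t (T istar (t - 1) w)"
    using arm_selection[OF w \<open>K < t\<close> istar(1)] t by simp
  ultimately show ?thesis using t(1) that by auto
qed

lemma overpull_in_bad_event:
  assumes i: "i \<in> {1..K}" "i \<noteq> istar" and u: "1 \<le> u" "U0 * real n powr \<eta>'' \<le> real u"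
    and w: "w \<in> space M" and pulls: "u < T i n w"
  shows "w \<in> bad_event n u"
proof -
  obtain t m where t: "K < t" "u < t" "t \<le> n" and m: "1 \<le> m" "m \<le> n"
    and selected: "rho_hat i u w - bonus t u \<le> rho_hat istar m w - bonus t m"
    using overpull_comparison[OF w u(1) pulls] .
  have "2 * bonus t u \<le> mu i - mu istar"
    using bonus_le_half_gap[OF u t(3)] gap_le[OF i] istar(2) by simp
  with selected consider "rho_hat i u w \<le> mu i - bonus t u" | "mu istar + bonus t m \<le> rho_hat istar m w"
    by linarith
  then show ?thesis
  proof cases
    case 1
    then have "real u * rho_hat i u w - real u * mu i \<le> - (real u * bonus t u)"
      using mult_left_mono[OF 1, of "real u"] by (simp add: algebra_simps)
    also have "\<dots> \<le> - (real u powr \<eta> * dev_level u)"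
      using count_mult_bonus[OF u(1), of t] dev_level_mono[of u t] t(2) by (simp add: mult_left_mono)
    finally have "w \<in> under_event i u" using w unfolding under_event_def by simp
    then show ?thesis unfolding bad_event_def using i by blast
  next
    case 2
    have "real m powr \<eta> * dev_level u \<le> real m * bonus t m"
      using count_mult_bonus[OF m(1), of t] dev_level_mono[of u t] t(2) by (simp add: mult_left_mono)
    also have "\<dots> \<le> real m * rho_hat istar m w - real m * mu istar"
      using mult_left_mono[OF 2, of "real m"] by (simp add: algebra_simps)
    finally have "w \<in> over_event m u" using w unfolding over_event_def by simp
    then show ?thesis unfolding bad_event_def using m by auto
  qed
qed

lemma suboptimal_pulls_le:
  assumes w: "w \<in> space M" "w \<notin> bad_event n u" and u: "1 \<le> u" "U0 * real n powr \<eta>'' \<le> real u"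
  shows "real n - real (T istar n w) \<le> real K * real u"
proof -
  have "T i n w \<le> u" if "i \<in> {1..K} - {istar}" for i
  proof (rule ccontr)
    assume "\<not> T i n w \<le> u"
    then show False using overpull_in_bad_event[OF _ _ u w(1), of i] that w(2) by auto
  qed
  then have "real n - real (T istar n w) \<le> (\<Sum>i\<in>{1..K} - {istar}. real u)"
    unfolding suboptimal_pulls_eq[OF w(1)] by (intro sum_mono) auto
  also have "\<dots> \<le> real K * real u"
    by (simp add: card_Diff_singleton_if mult_right_mono)
  finally show ?thesis .
qed

lemma sets_under_event: "i \<in> {1..K} \<Longrightarrow> under_event i u \<in> sets M"
  using measurable_rho_hat[of i u] unfolding under_event_def by measurable

lemma sets_over_event: "over_event m u \<in> sets M"
  using measurable_rho_hat[OF istar(1), of m] unfolding over_event_def by measurable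

lemma sets_bad_event: "bad_event n u \<in> sets M"
  unfolding bad_event_def using sets_under_event sets_over_event by auto

lemma measure_under_event: "i \<in> {1..K} \<Longrightarrow> 1 \<le> u \<Longrightarrow> measure M (under_event i u) \<le> 1 / real u powr \<alpha>"
  using tail_arm_lo[of i u "dev_level u"] dev_level_ge_1 tail_at_dev_level
  unfolding under_event_def by simp

lemma measure_over_event: "1 \<le> m \<Longrightarrow> 1 \<le> u \<Longrightarrow> measure M (over_event m u) \<le> 1 / real u powr \<alpha>"
  using tail_arm_up[OF istar(1), of m "dev_level u"] dev_level_ge_1 tail_at_dev_level
  unfolding over_event_def by simp

lemma measure_bad_event:
  assumes "1 \<le> n" "1 \<le> u"
  shows "measure M (bad_event n u) \<le> 2 * real K * real n / real u powr \<alpha>"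
proof -
  have "measure M (bad_event n u)
      \<le> (\<Sum>i\<in>{1..K} - {istar}. measure M (under_event i u)) + (\<Sum>m\<in>{1..n}. measure M (over_event m u))"
    unfolding bad_event_def using sets_under_event sets_over_event
    by (intro order_trans[OF measure_Un_le] add_mono measure_UNION_le) auto
  also have "\<dots> \<le> (\<Sum>i\<in>{1..K} - {istar}. 1 / real u powr \<alpha>) + (\<Sum>m\<in>{1..n}. 1 / real u powr \<alpha>)"
    using measure_under_event measure_over_event assms by (intro add_mono sum_mono) auto
  also have "\<dots> \<le> (real K + real n) / real u powr \<alpha>"
    by (simp add: card_Diff_singleton_if add_divide_distrib divide_right_mono)
  also have "\<dots> \<le> 2 * real K * real n / real u powr \<alpha>"
  proof (rule divide_right_mono)
    have "real K \<le> real K * real n" "real n \<le> real K * real n" using assms K by simp_all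
    then show "real K + real n \<le> 2 * real K * real n" by linarith
  qed simp
  finally show ?thesis .
qed

subsection \<open>Tails and expectation of the stream estimator\<close>

definition Z0 :: real where
  "Z0 = 4 * L * K * (U0 + 1) + 2"

lemma Z0_ge_2: "2 \<le> Z0"
  unfolding Z0_def using L_pos U0_nonneg by simp

definition pull_budget :: "nat \<Rightarrow> real \<Rightarrow> nat" where
  "pull_budget n z = nat \<lfloor>real n powr \<eta>'' * z / (2 * L * K)\<rfloor>"

lemma pull_budget_bounds:
  assumes n: "1 \<le> n" and z: "Z0 \<le> z"
  shows "1 \<le> pull_budget n z" "U0 * real n powr \<eta>'' \<le> real (pull_budget n z)"
    "real n powr \<eta>'' * z / (4 * L * K) \<le> real (pull_budget n z)"
    "L * K * real (pull_budget n z) \<le> real n powr \<eta>'' * z / 2"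
proof -
  define h where "h = real n powr \<eta>''"
  define q where "q = h * z / (2 * L * K)"
  have LK: "0 < L * K" using L_pos K by simp
  have h: "1 \<le> h" unfolding h_def using n eta''_bounds by (intro ge_one_powr_ge_zero) auto
  have q_half: "q / 2 = h * z / (4 * L * K)" unfolding q_def using LK by (simp add: field_simps)
  have "U0 + 1 \<le> z / (4 * L * K)" using z LK unfolding Z0_def by (simp add: field_simps)
  then have "h * (U0 + 1) \<le> h * (z / (4 * L * K))" using h by (intro mult_left_mono) auto
  then have "h * (U0 + 1) \<le> q / 2" unfolding q_half by simp
  moreover have "1 \<le> h * (U0 + 1)" using h U0_nonneg by (intro mult_ge1_I) auto
  moreover have "U0 * h \<le> h * (U0 + 1)" using h by (simp add: algebra_simps)
  ultimately have "2 \<le> q" "U0 * h \<le> q / 2" by linarith+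
  moreover have "real (pull_budget n z) \<le> q" "q - 1 \<le> real (pull_budget n z)"
    unfolding pull_budget_def h_def[symmetric] q_def[symmetric] using \<open>2 \<le> q\<close> by linarith+
  ultimately show "1 \<le> pull_budget n z" "U0 * h \<le> real (pull_budget n z)"
    "h * z / (4 * L * K) \<le> real (pull_budget n z)"
    unfolding q_half[symmetric] by linarith+
  have "L * K * real (pull_budget n z) \<le> L * K * q"
    using \<open>real (pull_budget n z) \<le> q\<close> LK by (intro mult_left_mono) auto
  also have "\<dots> = h * z / 2" unfolding q_def using L_pos K by (simp add: field_simps)
  finally show "L * K * real (pull_budget n z) \<le> h * z / 2" .
qed

lemma measure_bad_event_le_powr:
  assumes n: "1 \<le> n" and z: "1 \<le> z" and u: "1 \<le> u" "real n powr \<eta>'' * z / (4 * L * K) \<le> real u"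
  shows "measure M (bad_event n u) \<le> 2 * real K * (4 * L * K) powr \<alpha> / z powr (\<alpha> - 1)"
proof -
  define h where "h = real n powr \<eta>''"
  define C where "C = 4 * L * K"
  have C: "0 < C" unfolding C_def using L_pos K by simp
  have "real n \<le> h powr \<alpha>"
  proof -
    have "real n = real n powr 1" using n by simp
    also have "\<dots> \<le> real n powr (\<eta>'' * \<alpha>)" using n eta''_bounds by (intro powr_mono) auto
    finally show ?thesis unfolding h_def by (simp add: powr_powr)
  qed
  then have "real n * (z powr \<alpha> / C powr \<alpha>) \<le> h powr \<alpha> * (z powr \<alpha> / C powr \<alpha>)"
    by (intro mult_right_mono) auto
  also have "\<dots> = (h * z / C) powr \<alpha>"
    using z C unfolding h_def by (simp add: powr_mult powr_divide)
  also have "\<dots> \<le> real u powr \<alpha>"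
    using u z C \<alpha> unfolding h_def C_def by (intro powr_mono2) auto
  finally have low: "real n * (z powr \<alpha> / C powr \<alpha>) \<le> real u powr \<alpha>" .
  have pos: "0 < real n * (z powr \<alpha> / C powr \<alpha>)" using n z C by simp
  have "measure M (bad_event n u) \<le> 2 * real K * real n / real u powr \<alpha>"
    by (rule measure_bad_event[OF n u(1)])
  also have "\<dots> \<le> 2 * real K * real n / (real n * (z powr \<alpha> / C powr \<alpha>))"
  proof (rule divide_left_mono[OF low])
    show "0 < real u powr \<alpha> * (real n * (z powr \<alpha> / C powr \<alpha>))"
      using u(1) by (intro mult_pos_pos pos) simp
  qed simp
  also have "\<dots> = 2 * real K * C powr \<alpha> / z powr \<alpha>" using n z C by (simp add: field_simps)
  also have "\<dots> \<le> 2 * real K * C powr \<alpha> / z powr (\<alpha> - 1)"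
    using z C by (intro divide_left_mono powr_mono) auto
  finally show ?thesis unfolding C_def .
qed

definition C1 :: real where
  "C1 = \<theta>L * 2 powr \<xi> + 2 * real K * (4 * L * K) powr \<alpha>"

lemma stream_tails_large_z:
  assumes n: "1 \<le> n" and z: "Z0 \<le> z"
  shows "measure M {w \<in> space M. real n * stream n w - real n * mustar \<ge> real n powr \<eta>'' * z}
           \<le> C1 / z powr (\<alpha> - 1)"
    and "measure M {w \<in> space M. real n * stream n w - real n * mustar \<le> - (real n powr \<eta>'' * z)}
           \<le> C1 / z powr (\<alpha> - 1)"
proof -
  define u where "u = pull_budget n z"
  note u = pull_budget_bounds[OF n z, folded u_def]
  have "2 \<le> z" using z Z0_ge_2 by linarith
  have close: "\<bar>(real n * stream n w - real n * mustar) - (real n * rho_hat istar n w - real n * mu istar)\<bar>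
      \<le> real n powr \<eta>'' * z / 2" if "w \<in> space M" "w \<notin> bad_event n u" for w
  proof -
    have "L * (real n - real (T istar n w)) \<le> L * (real K * real u)"
      using suboptimal_pulls_le[OF that u(1,2)] L_pos by (intro mult_left_mono) auto
    then show ?thesis using stream_close_to_optimal_arm[OF that(1) n] u(4) istar(2) by (simp add: mult_ac)
  qed
  have "real n powr \<eta> \<le> real n powr \<eta>''" using n eta''_bounds by (intro powr_mono) auto
  then have margin: "real n powr \<eta>'' * z / 2 + real n powr \<eta> * (z / 2) \<le> real n powr \<eta>'' * z"
    using \<open>2 \<le> z\<close> by (simp add: mult_right_mono field_simps)
  note [measurable] = measurable_rho_hat[OF istar(1), of n]
  have sets: "{w \<in> space M. real n powr \<eta> * (z / 2) \<le> real n * rho_hat istar n w - real n * mu istar} \<in> sets M"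
    "{w \<in> space M. real n * rho_hat istar n w - real n * mu istar \<le> - (real n powr \<eta> * (z / 2))} \<in> sets M"
    by (measurable, measurable)
  note tails = measure_tails_le_of_close[OF sets sets_bad_event[of n u] close margin]
  have "\<theta>L / (z / 2) powr \<xi> = \<theta>L * 2 powr \<xi> / z powr \<xi>" using \<open>2 \<le> z\<close> by (simp add: powr_divide)
  also have "\<dots> \<le> \<theta>L * 2 powr \<xi> / z powr (\<alpha> - 1)"
    using \<open>2 \<le> z\<close> \<theta>L alpha_le by (intro divide_left_mono powr_mono mult_pos_pos) auto
  finally have arm: "\<theta>L / (z / 2) powr \<xi> \<le> \<theta>L * 2 powr \<xi> / z powr (\<alpha> - 1)" .
  have "1 \<le> z" using \<open>2 \<le> z\<close> by simp
  note bad = measure_bad_event_le_powr[OF n this u(1,3)]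
  have C1: "\<theta>L * 2 powr \<xi> / z powr (\<alpha> - 1) + 2 * real K * (4 * L * K) powr \<alpha> / z powr (\<alpha> - 1)
      = C1 / z powr (\<alpha> - 1)"
    unfolding C1_def by (simp add: add_divide_distrib)
  have "1 \<le> z / 2" using \<open>2 \<le> z\<close> by simp
  note arm_tails = tail_arm_up[OF istar(1) n this] tail_arm_lo[OF istar(1) n this]
  show "measure M {w \<in> space M. real n * stream n w - real n * mustar \<ge> real n powr \<eta>'' * z}
      \<le> C1 / z powr (\<alpha> - 1)"
    using tails(1) arm_tails(1) arm bad C1 by linarith
  show "measure M {w \<in> space M. real n * stream n w - real n * mustar \<le> - (real n powr \<eta>'' * z)}
      \<le> C1 / z powr (\<alpha> - 1)"
    using tails(2) arm_tails(2) arm bad C1 by linarith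
qed

definition \<theta>'' :: real where
  "\<theta>'' = C1 + Z0 powr (\<alpha> - 1) + 1"

lemma C1_nonneg: "0 \<le> C1"
  unfolding C1_def using \<theta>L by simp

lemma \<theta>''_gt_1: "1 < \<theta>''"
proof -
  have "0 < Z0 powr (\<alpha> - 1)" using Z0_ge_2 by simp
  then show ?thesis unfolding \<theta>''_def using C1_nonneg by linarith
qed

lemma stream_tails:
  assumes n: "1 \<le> n" and z: "1 \<le> z"
  shows "measure M {w \<in> space M. real n * stream n w - real n * mustar \<ge> real n powr \<eta>'' * z}
           \<le> \<theta>'' / z powr (\<alpha> - 1)"
    and "measure M {w \<in> space M. real n * stream n w - real n * mustar \<le> - (real n powr \<eta>'' * z)}
           \<le> \<theta>'' / z powr (\<alpha> - 1)"
proof -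
  have "0 < z" "0 \<le> \<alpha> - 1" "C1 \<le> \<theta>''" "Z0 powr (\<alpha> - 1) \<le> \<theta>''"
    using z \<alpha> C1_nonneg unfolding \<theta>''_def by auto
  note extend = measure_le_powr_if_large[OF this]
  show "measure M {w \<in> space M. real n * stream n w - real n * mustar \<ge> real n powr \<eta>'' * z}
      \<le> \<theta>'' / z powr (\<alpha> - 1)"
    by (rule extend) (rule stream_tails_large_z(1)[OF n])
  show "measure M {w \<in> space M. real n * stream n w - real n * mustar \<le> - (real n powr \<eta>'' * z)}
      \<le> \<theta>'' / z powr (\<alpha> - 1)"
    by (rule extend) (rule stream_tails_large_z(2)[OF n])
qed

definition error_const :: real where
  "error_const = 1 + 2 * \<theta>'' * (\<Sum>k. real k powr - (\<alpha> - 1))"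

lemma integral_abs_stream_error_le:
  assumes n: "1 \<le> n"
  shows "(\<integral>w. \<bar>real n * stream n w - real n * mustar\<bar> \<partial>M) \<le> real n powr \<eta>'' * error_const"
  unfolding error_const_def
proof (rule integral_abs_le_of_tails)
  show "(\<lambda>w. real n * stream n w - real n * mustar) \<in> borel_measurable M"
    using measurable_stream[of n] by measurable
  show "\<bar>real n * stream n w - real n * mustar\<bar> \<le> real n * R + real n * \<bar>mustar\<bar>"
    if "w \<in> space M" for w
  proof -
    have "\<bar>real n * stream n w - real n * mustar\<bar> \<le> real n * \<bar>stream n w\<bar> + real n * \<bar>mustar\<bar>"
      using abs_triangle_ineq4[of "real n * stream n w" "real n * mustar"] by (simp add: abs_mult)
    also have "\<dots> \<le> real n * R + real n * \<bar>mustar\<bar>"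
      using stream_bounded[OF that n] by (simp add: mult_left_mono)
    finally show ?thesis .
  qed
  show "0 < real n powr \<eta>''" using n by simp
  show "1 < \<alpha> - 1" using \<alpha> by simp
  show "0 \<le> \<theta>''" using \<theta>''_gt_1 by simp
qed (use stream_tails[OF n] in auto)

lemma expectation_error_le:
  assumes n: "1 \<le> n"
  shows "\<bar>mustar - expectation (stream n)\<bar> \<le> real n powr (\<eta>'' - 1) * error_const"
proof -
  have n_pos: "0 < real n" using n by simp
  have "integrable M (stream n)"
    using stream_bounded[OF _ n] measurable_stream[of n]
    by (intro integrable_const_bound[where B = R]) auto
  then have "real n * \<bar>mustar - expectation (stream n)\<bar>
      = \<bar>expectation (\<lambda>w. real n * stream n w - real n * mustar)\<bar>"
    using n_pos by (simp add: prob_space abs_mult abs_minus_commute flip: right_diff_distrib)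
  also have "\<dots> \<le> (\<integral>w. \<bar>real n * stream n w - real n * mustar\<bar> \<partial>M)"
    by (rule integral_abs_bound)
  also have "\<dots> \<le> real n powr \<eta>'' * error_const"
    by (rule integral_abs_stream_error_le[OF n])
  also have "\<dots> = real n * (real n powr (\<eta>'' - 1) * error_const)"
    using n_pos by (simp add: powr_diff)
  finally show ?thesis using n_pos by simp
qed

lemma expectation_error_bigo:
  "(\<lambda>n. \<bar>mustar - expectation (stream n)\<bar>) \<in> O(\<lambda>n. \<theta>'' * real n powr (\<eta>'' - 1))"
proof -
  have "\<forall>\<^sub>F n in sequentially.
      norm \<bar>mustar - expectation (stream n)\<bar>
        \<le> error_const / \<theta>'' * norm (\<theta>'' * real n powr (\<eta>'' - 1))"
    using eventually_ge_at_top[of 1]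
  proof eventually_elim
    case (elim n)
    have "error_const / \<theta>'' * norm (\<theta>'' * real n powr (\<eta>'' - 1)) = real n powr (\<eta>'' - 1) * error_const"
      using \<theta>''_gt_1 by (simp add: abs_mult)
    then show ?case using expectation_error_le[OF elim] by simp
  qed
  then show ?thesis by (rule bigoI)
qed

lemma expectation_tendsto: "(\<lambda>n. expectation (stream n)) \<longlonglongrightarrow> mustar"
proof -
  have "(\<lambda>n. real n powr (\<eta>'' - 1) * error_const) \<longlonglongrightarrow> 0 * error_const"
    using eta''_bounds(3) by (intro tendsto_mult_right tendsto_neg_powr filterlim_real_sequentially) auto
  then have bound_to_0: "(\<lambda>n. real n powr (\<eta>'' - 1) * error_const) \<longlonglongrightarrow> 0" by simp
  have "\<forall>\<^sub>F n in sequentially.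
      norm (expectation (stream n) - mustar) \<le> real n powr (\<eta>'' - 1) * error_const"
    using eventually_ge_at_top[of 1]
    by eventually_elim (use expectation_error_le in \<open>simp add: abs_minus_commute\<close>)
  from Lim_null_comparison[OF this bound_to_0]
  show ?thesis by (rule LIM_zero_cancel)
qed

end

theorem theorem5:
  fixes M :: "'w measure"
    and K :: nat and \<beta> \<gamma> Rc Rx :: real
    and c :: "nat \<Rightarrow> real"
    and P :: "nat \<Rightarrow> 's::finite pmf"
    and Snext :: "nat \<Rightarrow> nat \<Rightarrow> 'w \<Rightarrow> 's"
    and x :: "nat \<Rightarrow> 's \<Rightarrow> nat \<Rightarrow> 'w \<Rightarrow> real"
    and mus :: "nat \<Rightarrow> 's \<Rightarrow> real"
    and \<theta> \<xi> \<eta> \<alpha> \<theta>L :: real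
    and a :: "nat \<Rightarrow> 'w \<Rightarrow> nat"
  assumes M: "prob_space M"
    and K: "K \<ge> 1"
    and \<beta>: "\<beta> > 0" and \<gamma>: "0 < \<gamma>" "\<gamma> \<le> 1"
    and c_bd: "\<And>i. i \<in> {1..K} \<Longrightarrow> \<bar>c i\<bar> \<le> Rc"
    and x_meas: "\<And>i s t. i \<in> {1..K} \<Longrightarrow> x i s t \<in> borel_measurable M"
    and x_bd: "\<And>i s t w. i \<in> {1..K} \<Longrightarrow> t \<ge> 1 \<Longrightarrow> w \<in> space M \<Longrightarrow> \<bar>x i s t w\<bar> \<le> Rx"
    and S_meas: "\<And>i k. i \<in> {1..K} \<Longrightarrow> k \<ge> 1 \<Longrightarrow> Snext i k \<in> measurable M (count_space UNIV)"
    and S_distr: "\<And>i k. i \<in> {1..K} \<Longrightarrow> k \<ge> 1 \<Longrightarrow>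
                    distr M (count_space UNIV) (Snext i k) = measure_pmf (P i)"
    and S_indep: "prob_space.indep_vars M (\<lambda>_. count_space UNIV) (\<lambda>(i, k). Snext i k)
                    ({1..K} \<times> {1..})"
    and mus_lim: "\<And>i s. i \<in> {1..K} \<Longrightarrow>
                    (\<lambda>n. integral\<^sup>L M (rho_hat_state \<beta> \<gamma> x i s n)) \<longlonglongrightarrow> mus i s"
    and \<theta>: "\<theta> > 1" and \<xi>: "\<xi> > 1" and \<eta>: "1/2 \<le> \<eta>" "\<eta> < 1"
    and \<alpha>: "\<alpha> > 2" "\<xi> * \<eta> * (1 - \<eta>) \<le> \<alpha>" "\<alpha> < \<xi> * (1 - \<eta>)"
    and tail_state_up: "\<And>i s n z. i \<in> {1..K} \<Longrightarrow> n \<ge> 1 \<Longrightarrow> z \<ge> 1 \<Longrightarrow>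
          measure M {w \<in> space M. real n * rho_hat_state \<beta> \<gamma> x i s n w - real n * mus i s
                                    \<ge> real n powr \<eta> * z} \<le> \<theta> / z powr \<xi>"
    and tail_state_lo: "\<And>i s n z. i \<in> {1..K} \<Longrightarrow> n \<ge> 1 \<Longrightarrow> z \<ge> 1 \<Longrightarrow>
          measure M {w \<in> space M. real n * rho_hat_state \<beta> \<gamma> x i s n w - real n * mus i s
                                    \<le> - (real n powr \<eta> * z)} \<le> \<theta> / z powr \<xi>"
    and \<theta>L: "\<theta>L > 1"
    and tail_arm_up: "\<And>i n z. i \<in> {1..K} \<Longrightarrow> n \<ge> 1 \<Longrightarrow> z \<ge> 1 \<Longrightarrow>
          measure M {w \<in> space M. real n * rho_hat_arm \<beta> \<gamma> c x Snext i n w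
                                    - real n * mu_arm \<beta> \<gamma> c P mus i
                                    \<ge> real n powr \<eta> * z} \<le> \<theta>L / z powr \<xi>"
    and tail_arm_lo: "\<And>i n z. i \<in> {1..K} \<Longrightarrow> n \<ge> 1 \<Longrightarrow> z \<ge> 1 \<Longrightarrow>
          measure M {w \<in> space M. real n * rho_hat_arm \<beta> \<gamma> c x Snext i n w
                                    - real n * mu_arm \<beta> \<gamma> c P mus i
                                    \<le> - (real n powr \<eta> * z)} \<le> \<theta>L / z powr \<xi>"
    and unique_opt: "\<exists>!i. i \<in> {1..K} \<and>
                       mu_arm \<beta> \<gamma> c P mus i = Min (mu_arm \<beta> \<gamma> c P mus ` {1..K})"
    and a_meas: "\<And>t. a t \<in> measurable M (count_space UNIV)"
    and run: "ucb_run K \<beta> \<gamma> c x Snext \<theta>L \<xi> \<alpha> \<eta> (space M) a"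
  shows "\<exists>\<theta>''>1.
     (\<forall>n\<ge>1. \<forall>z\<ge>1.
        measure M {w \<in> space M.
            real n * rho_stream K \<beta> \<gamma> c x Snext a n w
              - real n * Min (mu_arm \<beta> \<gamma> c P mus ` {1..K})
            \<ge> real n powr (\<alpha> / (\<xi> * (1 - \<eta>))) * z} \<le> \<theta>'' / z powr (\<alpha> - 1)
      \<and> measure M {w \<in> space M.
            real n * rho_stream K \<beta> \<gamma> c x Snext a n w
              - real n * Min (mu_arm \<beta> \<gamma> c P mus ` {1..K})
            \<le> - (real n powr (\<alpha> / (\<xi> * (1 - \<eta>))) * z)} \<le> \<theta>'' / z powr (\<alpha> - 1))
     \<and> (\<lambda>n. \<bar>Min (mu_arm \<beta> \<gamma> c P mus ` {1..K})
              - integral\<^sup>L M (rho_stream K \<beta> \<gamma> c x Snext a n)\<bar>)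
         \<in> O(\<lambda>n. \<theta>'' * real n powr (\<alpha> / (\<xi> * (1 - \<eta>)) - 1))
     \<and> (\<lambda>n. integral\<^sup>L M (rho_stream K \<beta> \<gamma> c x Snext a n))
         \<longlonglongrightarrow> Min (mu_arm \<beta> \<gamma> c P mus ` {1..K})"
proof -
  interpret bandit: ucb_bandit M K \<beta> \<gamma> Rc Rx c P Snext x mus \<xi> \<eta> \<alpha> \<theta>L a
    by (rule ucb_bandit.intro[OF M ucb_bandit_axioms.intro])
      (fact K \<beta> \<gamma> c_bd x_meas x_bd S_meas \<xi> \<eta> \<alpha> \<theta>L tail_arm_up tail_arm_lo unique_opt a_meas run)+
  show ?thesis
    using bandit.\<theta>''_gt_1 bandit.stream_tails bandit.expectation_error_bigo bandit.expectation_tendsto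
    by blast
qed

end
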